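(* Let $R$ be a pmp equivalence relation and $F\subseteq\llbracket R\rrbracket$ finite. Then $s(F)=\lim_{\varepsilon\to0}s_\varepsilon(F)$, and likewise $\underline s(F)=\lim_{\varepsilon\to0}\underline s_\varepsilon(F)$ and $s_\omega(F)=\lim_{\varepsilon\to0}s_{\omega,\varepsilon}(F)$ for every nonprincipal ultrafilter $\omega$.
   Context: Let $(X,\mu)$ be a standard probability space and $R$ a pmp countable Borel equivalence relation. $\llbracket R\rrbracket$ denotes the set of partial measure-preserving Borel bijections between Borel subsets of $X$ with graph contained in $R$, modulo null sets, with composition, inverses and identity $1$. Pairwise orthogonal elements (pairwise disjoint domains and ranges) have a sum; $\mathbf\Sigma F$ is the set of finite sums of pairwise orthogonal elements of $F$; $F_\pm=F\cup\{s^{-1}:s\in F\}\cup\{1\}$; $F_\pm^n$ the products of $n$ elements of $F_\pm$. $|s-t|=\mu\{x\in\operatorname{dom}s\cup\operatorname{dom}t:s(x)\neq t(x)\}$ (with $s(x)\neq t(x)$ on $\operatorname{dom}s\triangle\operatorname{dom}t$), $\tau(s)=\mu\{x\in\operatorname{dom}s:s(x)=x\}$. $\llbracket d\rrbracket$: partial permutations of $\{1,\dots,d\}$ with uniform measure, same distance, trace $\operatorname{tr}$. ${\rm SA}(F,n,\delta,d)$ is the set of maps $\varphi:\llbracket R\rrbracket\to\llbracket d\rrbracket$ with $\varphi(1)=1$ such that $|\varphi(st)-\varphi(s)\varphi(t)|<\delta$ for all $s,t\in\mathbf\Sigma F_\pm^n$ with $st\in\mathbf\Sigma F_\pm^n$,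 and $|\operatorname{tr}(\varphi(s))-\tau(s)|<\delta$ for all $s\in\mathbf\Sigma F_\pm^n$. For maps $\varphi,\psi$ put $|\varphi-\psi|_F=\max_{s\in F}|\varphi(s)-\psi(s)|$, and for $\varepsilon\ge0$ let $N_\varepsilon(S)$ be the minimal number of closed $|\cdot|_F$-balls of radius $\varepsilon$ covering a set $S$ of maps. Define $s_\varepsilon(F)=\inf_n\inf_{\delta>0}\limsup_{d\to\infty}\frac{1}{d\log d}\log N_\varepsilon({\rm SA}(F,n,\delta,d))$ ($\log0=-\infty$); $\underline s_\varepsilon(F)$ uses $\liminf_d$, $s_{\omega,\varepsilon}(F)$ uses $\lim_{d\to\omega}$; $s(F),\underline s(F),s_\omega(F)$ are the case $\varepsilon=0$ (where $N_0$ counts distinct restrictions to $F$). *)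

theory Defs
  imports "HOL-Analysis.Analysis" "HOL-Probability.Probability"
begin

type_synonym 'a pmap = "'a \<Rightarrow> 'a option"

definition pimage :: "'a pmap \<Rightarrow> 'a set \<Rightarrow> 'a set" where
  "pimage f A = {y. \<exists>x\<in>A. f x = Some y}"

definition pgraph_in :: "('a \<times> 'a) set \<Rightarrow> 'a pmap \<Rightarrow> bool" where
  "pgraph_in R f \<longleftrightarrow> (\<forall>x y. f x = Some y \<longrightarrow> (x, y) \<in> R)"

definition borel_pinj :: "'a measure \<Rightarrow> ('a \<times> 'a) set \<Rightarrow> 'a pmap \<Rightarrow> bool" where
  "borel_pinj M R f \<longleftrightarrow> dom f \<in> sets M \<and> ran f \<in> sets M \<and> inj_on f (dom f) \<and> pgraph_in R f
     \<and> (\<forall>B\<in>sets M. {x. \<exists>y\<in>B. f x = Some y} \<in> sets M)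
     \<and> (\<forall>A\<in>sets M. pimage f A \<in> sets M)"

definition pmp_cber :: "'a measure \<Rightarrow> ('a \<times> 'a) set \<Rightarrow> bool" where
  "pmp_cber M R \<longleftrightarrow> equiv (space M) R \<and> R \<in> sets (M \<Otimes>\<^sub>M M)
     \<and> (\<forall>x\<in>space M. countable (R `` {x}))
     \<and> (\<forall>f. borel_pinj M R f \<longrightarrow>
           (\<forall>A\<in>sets M. A \<subseteq> dom f \<longrightarrow> measure M (pimage f A) = measure M A))"

definition pbij :: "'a measure \<Rightarrow> ('a \<times> 'a) set \<Rightarrow> 'a pmap \<Rightarrow> bool" where
  "pbij M R f \<longleftrightarrow> borel_pinj M R f \<and>
     (\<forall>A\<in>sets M. A \<subseteq> dom f \<longrightarrow> measure M (pimage f A) = measure M A)"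

text \<open>The class of f modulo null sets (f x \<noteq> g x includes the symmetric difference of domains).\<close>
definition pm_class :: "'a measure \<Rightarrow> ('a \<times> 'a) set \<Rightarrow> 'a pmap \<Rightarrow> 'a pmap set" where
  "pm_class M R f = {g. pbij M R g \<and> {x. f x \<noteq> g x} \<in> null_sets M}"

text \<open>The full pseudogroup [[R]]: elements are classes modulo null sets.\<close>
definition fullpg :: "'a measure \<Rightarrow> ('a \<times> 'a) set \<Rightarrow> 'a pmap set set" where
  "fullpg M R = {pm_class M R f | f. pbij M R f}"

definition rep :: "'a pmap set \<Rightarrow> 'a pmap" where
  "rep S = (SOME f. f \<in> S)"

definition pinv :: "'a pmap \<Rightarrow> 'a pmap" where
  "pinv f = (\<lambda>y. if \<exists>x. f x = Some y then Some (THE x. f x = Some y) else None)"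

definition pg_mult :: "'a measure \<Rightarrow> ('a \<times> 'a) set \<Rightarrow> 'a pmap set \<Rightarrow> 'a pmap set \<Rightarrow> 'a pmap set" where
  "pg_mult M R S T = pm_class M R (rep S \<circ>\<^sub>m rep T)"

definition pg_inv :: "'a measure \<Rightarrow> ('a \<times> 'a) set \<Rightarrow> 'a pmap set \<Rightarrow> 'a pmap set" where
  "pg_inv M R S = pm_class M R (pinv (rep S))"

definition pg_one :: "'a measure \<Rightarrow> ('a \<times> 'a) set \<Rightarrow> 'a pmap set" where
  "pg_one M R = pm_class M R Some"

definition pg_dist :: "'a measure \<Rightarrow> 'a pmap set \<Rightarrow> 'a pmap set \<Rightarrow> real" where
  "pg_dist M S T = measure M {x. rep S x \<noteq> rep T x}"

definition pg_tr :: "'a measure \<Rightarrow> 'a pmap set \<Rightarrow> real" where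
  "pg_tr M S = measure M {x. rep S x = Some x}"

definition pg_orth :: "'a measure \<Rightarrow> 'a pmap set \<Rightarrow> 'a pmap set \<Rightarrow> bool" where
  "pg_orth M S T \<longleftrightarrow> dom (rep S) \<inter> dom (rep T) \<in> null_sets M
      \<and> ran (rep S) \<inter> ran (rep T) \<in> null_sets M"

definition pg_is_sum :: "'a measure \<Rightarrow> 'a pmap set set \<Rightarrow> 'a pmap set \<Rightarrow> bool" where
  "pg_is_sum M A T \<longleftrightarrow> (AE x in M. (\<forall>S\<in>A. rep S x \<noteq> None \<longrightarrow> rep T x = rep S x)
                              \<and> ((\<forall>S\<in>A. rep S x = None) \<longrightarrow> rep T x = None))"

definition pg_Sigma :: "'a measure \<Rightarrow> ('a \<times> 'a) set \<Rightarrow> 'a pmap set set \<Rightarrow> 'a pmap set set" where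
  "pg_Sigma M R G = {T \<in> fullpg M R. \<exists>A. finite A \<and> A \<subseteq> G
      \<and> (\<forall>S\<in>A. \<forall>S'\<in>A. S \<noteq> S' \<longrightarrow> pg_orth M S S') \<and> pg_is_sum M A T}"

definition pg_pm :: "'a measure \<Rightarrow> ('a \<times> 'a) set \<Rightarrow> 'a pmap set set \<Rightarrow> 'a pmap set set" where
  "pg_pm M R G = G \<union> pg_inv M R ` G \<union> {pg_one M R}"

primrec pg_pow :: "'a measure \<Rightarrow> ('a \<times> 'a) set \<Rightarrow> 'a pmap set set \<Rightarrow> nat \<Rightarrow> 'a pmap set set" where
  "pg_pow M R G 0 = {pg_one M R}"
| "pg_pow M R G (Suc n) = {pg_mult M R s t | s t. s \<in> pg_pm M R G \<and> t \<in> pg_pow M R G n}"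

definition ppd :: "nat \<Rightarrow> (nat \<Rightarrow> nat option) set" where
  "ppd d = {\<sigma>. dom \<sigma> \<subseteq> {1..d} \<and> ran \<sigma> \<subseteq> {1..d} \<and> inj_on \<sigma> (dom \<sigma>)}"

definition pp_one :: "nat \<Rightarrow> nat \<Rightarrow> nat option" where
  "pp_one d = (\<lambda>i. if i \<in> {1..d} then Some i else None)"

definition pp_dist :: "nat \<Rightarrow> (nat \<Rightarrow> nat option) \<Rightarrow> (nat \<Rightarrow> nat option) \<Rightarrow> real" where
  "pp_dist d \<sigma> \<tau> = real (card {i\<in>{1..d}. \<sigma> i \<noteq> \<tau> i}) / real d"

definition pp_tr :: "nat \<Rightarrow> (nat \<Rightarrow> nat option) \<Rightarrow> real" where
  "pp_tr d \<sigma> = real (card {i\<in>{1..d}. \<sigma> i = Some i}) / real d"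

definition sa_maps :: "'a measure \<Rightarrow> ('a \<times> 'a) set \<Rightarrow> nat \<Rightarrow> ('a pmap set \<Rightarrow> nat \<Rightarrow> nat option) set" where
  "sa_maps M R d = {\<phi>. \<forall>s\<in>fullpg M R. \<phi> s \<in> ppd d}"

definition SA :: "'a measure \<Rightarrow> ('a \<times> 'a) set \<Rightarrow> 'a pmap set set \<Rightarrow> nat \<Rightarrow> real \<Rightarrow> nat
    \<Rightarrow> ('a pmap set \<Rightarrow> nat \<Rightarrow> nat option) set" where
  "SA M R F n \<delta> d = {\<phi> \<in> sa_maps M R d. \<phi> (pg_one M R) = pp_one d
     \<and> (\<forall>s\<in>pg_Sigma M R (pg_pow M R (pg_pm M R F) n). \<forall>t\<in>pg_Sigma M R (pg_pow M R (pg_pm M R F) n).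
          pg_mult M R s t \<in> pg_Sigma M R (pg_pow M R (pg_pm M R F) n) \<longrightarrow>
          pp_dist d (\<phi> (pg_mult M R s t)) (\<phi> s \<circ>\<^sub>m \<phi> t) < \<delta>)
     \<and> (\<forall>s\<in>pg_Sigma M R (pg_pow M R (pg_pm M R F) n). \<bar>pp_tr d (\<phi> s) - pg_tr M s\<bar> < \<delta>)}"

definition fball :: "'a pmap set set \<Rightarrow> nat \<Rightarrow> ('a pmap set \<Rightarrow> nat \<Rightarrow> nat option) \<Rightarrow> real
    \<Rightarrow> ('a pmap set \<Rightarrow> nat \<Rightarrow> nat option) set" where
  "fball F d \<psi> \<epsilon> = {\<phi>. \<forall>s\<in>F. pp_dist d (\<phi> s) (\<psi> s) \<le> \<epsilon>}"

definition covnum :: "'a measure \<Rightarrow> ('a \<times> 'a) set \<Rightarrow> 'a pmap set set \<Rightarrow> nat \<Rightarrow> real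
    \<Rightarrow> ('a pmap set \<Rightarrow> nat \<Rightarrow> nat option) set \<Rightarrow> nat" where
  "covnum M R F d \<epsilon> S = (LEAST k. \<exists>C. finite C \<and> C \<subseteq> sa_maps M R d \<and> card C = k
       \<and> S \<subseteq> (\<Union>\<psi>\<in>C. fball F d \<psi> \<epsilon>))"

definition sa_term :: "'a measure \<Rightarrow> ('a \<times> 'a) set \<Rightarrow> 'a pmap set set \<Rightarrow> real \<Rightarrow> nat \<Rightarrow> real \<Rightarrow> nat \<Rightarrow> ereal" where
  "sa_term M R F \<epsilon> n \<delta> d =
     (let N = covnum M R F d \<epsilon> (SA M R F n \<delta> d) in
      if N = 0 then -\<infinity> else ereal (ln (real N) / (real d * ln (real d))))"

definition s_eps :: "'a measure \<Rightarrow> ('a \<times> 'a) set \<Rightarrow> 'a pmap set set \<Rightarrow> real \<Rightarrow> ereal" where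
  "s_eps M R F \<epsilon> = (INF n. INF \<delta>\<in>{0<..}. limsup (\<lambda>d. sa_term M R F \<epsilon> n \<delta> d))"

definition ls_eps :: "'a measure \<Rightarrow> ('a \<times> 'a) set \<Rightarrow> 'a pmap set set \<Rightarrow> real \<Rightarrow> ereal" where
  "ls_eps M R F \<epsilon> = (INF n. INF \<delta>\<in>{0<..}. liminf (\<lambda>d. sa_term M R F \<epsilon> n \<delta> d))"

definition nonprincipal_ultrafilter :: "nat filter \<Rightarrow> bool" where
  "nonprincipal_ultrafilter \<omega> \<longleftrightarrow> \<omega> \<noteq> bot
     \<and> (\<forall>P. eventually P \<omega> \<or> eventually (\<lambda>x. \<not> P x) \<omega>)
     \<and> (\<forall>n. eventually (\<lambda>x. x \<noteq> n) \<omega>)"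

definition so_eps :: "'a measure \<Rightarrow> ('a \<times> 'a) set \<Rightarrow> 'a pmap set set \<Rightarrow> nat filter \<Rightarrow> real \<Rightarrow> ereal" where
  "so_eps M R F \<omega> \<epsilon> = (INF n. INF \<delta>\<in>{0<..}. Lim \<omega> (\<lambda>d. sa_term M R F \<epsilon> n \<delta> d))"

end

theory Submission imports Defs begin

(* Write N_e for the e-covering number of SA(F,n,delta,d) with respect to |.|_F.
   A closed |.|_F-ball of radius e contains, for every s in F, only partial
   permutations that differ from a fixed one in at most m = floor(e d) points of
   {1..d}; there are at most 2^d (d+1)^m of those (choose the set of changed points
   and the new values).  Hence every e-cover can be refined to an exact cover, and
     N_e <= N_0 <= N_e * (2^d (d+1)^m)^|F|.
   For large d the logarithm of the factor is at most 3 |F| e d log d, so the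
   normalised counting term satisfies  T_e <= T_0 <= T_e + 3|F| e  eventually in d.
   Any limit functional L (limsup, liminf, or the limit along an ultrafilter) that
   is monotone w.r.t. eventual inequality and commutes with adding a constant
   turns this into  s_e <= s_0 <= s_e + 3|F| e, and a sandwich argument gives
   s_e --> s_0 as e --> 0+. *)

subsection \<open>Hamming balls of partial permutations\<close>

definition hamming_ball :: "nat \<Rightarrow> (nat \<Rightarrow> nat option) \<Rightarrow> nat \<Rightarrow> (nat \<Rightarrow> nat option) set" where
  "hamming_ball d \<tau> m = {\<sigma>\<in>ppd d. card {i\<in>{1..d}. \<sigma> i \<noteq> \<tau> i} \<le> m}"

definition pp_values :: "nat \<Rightarrow> nat option set" where
  "pp_values d = insert None (Some ` {1..d})"

definition patch :: "nat \<Rightarrow> (nat \<Rightarrow> nat option) \<Rightarrow> nat set \<Rightarrow> (nat \<Rightarrow> nat option) \<Rightarrow> nat \<Rightarrow> nat option" where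
  "patch d \<tau> D h i = (if i \<in> D then h i else if i \<in> {1..d} then \<tau> i else None)"

lemma hamming_ball_subset_patches:
  "hamming_ball d \<tau> m \<subseteq>
     (\<Union>D\<in>{D. D \<subseteq> {1..d} \<and> card D \<le> m}. patch d \<tau> D ` PiE D (\<lambda>_. pp_values d))"
proof
  fix \<sigma> assume \<sigma>: "\<sigma> \<in> hamming_ball d \<tau> m"
  define D where "D = {i\<in>{1..d}. \<sigma> i \<noteq> \<tau> i}"
  have dom_ran: "dom \<sigma> \<subseteq> {1..d}" "ran \<sigma> \<subseteq> {1..d}"
    using \<sigma> by (auto simp: hamming_ball_def ppd_def)
  have "\<sigma> = patch d \<tau> D (restrict \<sigma> D)"
    using dom_ran by (intro ext) (auto simp: patch_def D_def dom_def)
  moreover have "\<sigma> i \<in> pp_values d" for i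
    using dom_ran by (cases "\<sigma> i") (auto simp: pp_values_def ran_def)
  then have "restrict \<sigma> D \<in> PiE D (\<lambda>_. pp_values d)" by auto
  moreover have "D \<subseteq> {1..d} \<and> card D \<le> m" using \<sigma> by (auto simp: D_def hamming_ball_def)
  ultimately show "\<sigma> \<in> (\<Union>D\<in>{D. D \<subseteq> {1..d} \<and> card D \<le> m}. patch d \<tau> D ` PiE D (\<lambda>_. pp_values d))"
    by blast
qed

text \<open>Counting: choose the changed points (\<open>2^d\<close> ways) and their new values.\<close>
lemma card_hamming_ball: "finite (hamming_ball d \<tau> m) \<and> card (hamming_ball d \<tau> m) \<le> 2^d * (d+1)^m"
proof -
  define I where "I = {D. D \<subseteq> {1..d} \<and> card D \<le> m}"
  define G where "G D = patch d \<tau> D ` PiE D (\<lambda>_. pp_values d)" for D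
  have card_values: "card (pp_values d) = d + 1"
    unfolding pp_values_def by (subst card_insert_disjoint) (auto simp: card_image)
  have fin_I: "finite I" unfolding I_def by (rule finite_subset[of _ "Pow {1..d}"]) auto
  have card_I: "card I \<le> 2^d"
    using card_mono[of "Pow {1..d}" I] by (auto simp: I_def card_Pow)
  have fin_D: "D \<in> I \<Longrightarrow> finite D" for D unfolding I_def using finite_subset by blast
  have fin_G: "D \<in> I \<Longrightarrow> finite (G D)" for D
    unfolding G_def using fin_D by (auto simp: pp_values_def intro!: finite_PiE)
  have card_G: "card (G D) \<le> (d+1)^m" if D: "D \<in> I" for D
  proof -
    have "card (G D) \<le> card (PiE D (\<lambda>_. pp_values d))"
      unfolding G_def using fin_D[OF D] by (intro card_image_le finite_PiE) (auto simp: pp_values_def)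
    also have "\<dots> = (d+1)^card D" using fin_D[OF D] by (simp add: card_PiE card_values)
    also have "\<dots> \<le> (d+1)^m" using D by (auto simp: I_def intro: power_increasing)
    finally show ?thesis .
  qed
  have sub: "hamming_ball d \<tau> m \<subseteq> (\<Union>D\<in>I. G D)"
    using hamming_ball_subset_patches unfolding I_def G_def .
  have fin_U: "finite (\<Union>D\<in>I. G D)" using fin_I fin_G by auto
  have "card (hamming_ball d \<tau> m) \<le> card (\<Union>D\<in>I. G D)" by (rule card_mono[OF fin_U sub])
  also have "\<dots> \<le> (\<Sum>D\<in>I. card (G D))" by (rule card_UN_le[OF fin_I])
  also have "\<dots> \<le> card I * (d+1)^m" using sum_bounded_above[of I "\<lambda>D. card (G D)", OF card_G] by simp
  also have "\<dots> \<le> 2^d * (d+1)^m" using card_I by simp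
  finally show ?thesis using finite_subset[OF sub fin_U] by simp
qed

lemma card_disagree_le_floor:
  assumes "pp_dist d \<sigma> \<tau> \<le> e"
  shows "card {i\<in>{1..d}. \<sigma> i \<noteq> \<tau> i} \<le> nat \<lfloor>e * real d\<rfloor>"
proof (cases "d = 0")
  case False
  then have "real (card {i\<in>{1..d}. \<sigma> i \<noteq> \<tau> i}) \<le> e * real d"
    using assms by (simp add: pp_dist_def pos_divide_le_eq)
  then show ?thesis by (metis le_nat_floor)
qed simp

subsection \<open>Covers and their refinement\<close>

definition is_cover :: "'a measure \<Rightarrow> ('a \<times> 'a) set \<Rightarrow> 'a pmap set set \<Rightarrow> nat \<Rightarrow> real
    \<Rightarrow> ('a pmap set \<Rightarrow> nat \<Rightarrow> nat option) set \<Rightarrow> ('a pmap set \<Rightarrow> nat \<Rightarrow> nat option) set \<Rightarrow> bool" where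
  "is_cover M R F d e S C \<longleftrightarrow> finite C \<and> C \<subseteq> sa_maps M R d \<and> S \<subseteq> (\<Union>\<psi>\<in>C. fball F d \<psi> e)"

lemma is_cover_mono:
  assumes "is_cover M R F d e S C" and "e \<le> e'"
  shows "is_cover M R F d e' S C"
proof -
  have "fball F d \<psi> e \<subseteq> fball F d \<psi> e'" for \<psi> using assms(2) by (auto simp: fball_def)
  then have "(\<Union>\<psi>\<in>C. fball F d \<psi> e) \<subseteq> (\<Union>\<psi>\<in>C. fball F d \<psi> e')" by blast
  then show ?thesis using assms(1) unfolding is_cover_def by blast
qed

text \<open>An \<open>e\<close>-cover by \<open>k\<close> balls leaves at most \<open>k K^|F|\<close> possible restrictions to \<open>F\<close>,
  where \<open>K\<close> bounds the size of a Hamming ball of radius \<open>\<lfloor>e d\<rfloor>\<close>.\<close>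
lemma card_restrictions_le:
  assumes cov: "is_cover M R F d e S C" and S: "S \<subseteq> sa_maps M R d"
    and F: "F \<subseteq> fullpg M R" "finite F"
  shows "finite ((\<lambda>\<phi>. restrict \<phi> F) ` S)
    \<and> card ((\<lambda>\<phi>. restrict \<phi> F) ` S) \<le> card C * (2^d * (d+1)^nat \<lfloor>e * real d\<rfloor>)^card F"
proof -
  define K where "K = 2^d * (d+1)^nat \<lfloor>e * real d\<rfloor>"
  define Q where "Q \<psi> = PiE F (\<lambda>s. hamming_ball d (\<psi> s) (nat \<lfloor>e * real d\<rfloor>))"
    for \<psi> :: "'a pmap set \<Rightarrow> nat \<Rightarrow> nat option"
  have sub: "(\<lambda>\<phi>. restrict \<phi> F) ` S \<subseteq> (\<Union>\<psi>\<in>C. Q \<psi>)"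
  proof clarify
    fix \<phi> assume \<phi>: "\<phi> \<in> S"
    then obtain \<psi> where \<psi>: "\<psi> \<in> C" "\<phi> \<in> fball F d \<psi> e" using cov by (auto simp: is_cover_def)
    have "\<phi> s \<in> hamming_ball d (\<psi> s) (nat \<lfloor>e * real d\<rfloor>)" if s: "s \<in> F" for s
    proof -
      have "\<phi> s \<in> ppd d" using \<phi> S F(1) s by (auto simp: sa_maps_def)
      moreover have "pp_dist d (\<phi> s) (\<psi> s) \<le> e" using \<psi>(2) s by (auto simp: fball_def)
      ultimately show ?thesis using card_disagree_le_floor by (auto simp: hamming_ball_def)
    qed
    then show "restrict \<phi> F \<in> (\<Union>\<psi>\<in>C. Q \<psi>)" using \<psi>(1) by (auto simp: Q_def)
  qed
  have fin_Q: "finite (Q \<psi>)" for \<psi> unfolding Q_def using card_hamming_ball F(2) by (auto intro!: finite_PiE)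
  have card_Q: "card (Q \<psi>) \<le> K^card F" for \<psi>
  proof -
    have "card (Q \<psi>) = (\<Prod>s\<in>F. card (hamming_ball d (\<psi> s) (nat \<lfloor>e * real d\<rfloor>)))"
      unfolding Q_def using F(2) by (simp add: card_PiE)
    also have "\<dots> \<le> (\<Prod>s\<in>F. K)" by (rule prod_mono) (use card_hamming_ball K_def in auto)
    finally show ?thesis by simp
  qed
  have fin_C: "finite C" using cov by (simp add: is_cover_def)
  have fin_U: "finite (\<Union>\<psi>\<in>C. Q \<psi>)" using fin_C fin_Q by auto
  have "card ((\<lambda>\<phi>. restrict \<phi> F) ` S) \<le> card (\<Union>\<psi>\<in>C. Q \<psi>)" by (rule card_mono[OF fin_U sub])
  also have "\<dots> \<le> (\<Sum>\<psi>\<in>C. card (Q \<psi>))" by (rule card_UN_le[OF fin_C])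
  also have "\<dots> \<le> card C * K^card F" using sum_bounded_above[of C "\<lambda>\<psi>. card (Q \<psi>)", OF card_Q] by simp
  finally show ?thesis using finite_subset[OF sub fin_U] by (simp add: K_def)
qed

text \<open>Choosing one map of \<open>S\<close> for each restriction to \<open>F\<close> gives an exact (radius 0) cover.\<close>
lemma exact_cover_from_restrictions:
  assumes S: "S \<subseteq> sa_maps M R d" and fin: "finite ((\<lambda>\<phi>. restrict \<phi> F) ` S)"
  shows "\<exists>C. is_cover M R F d 0 S C \<and> card C \<le> card ((\<lambda>\<phi>. restrict \<phi> F) ` S)"
proof -
  let ?r = "\<lambda>\<phi>. restrict \<phi> F"
  define C where "C = inv_into S ?r ` ?r ` S"
  have "\<phi> \<in> fball F d (inv_into S ?r (?r \<phi>)) 0" if \<phi>: "\<phi> \<in> S" for \<phi>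
  proof -
    define \<psi> where "\<psi> = inv_into S ?r (?r \<phi>)"
    have eq: "restrict \<psi> F = restrict \<phi> F" unfolding \<psi>_def using f_inv_into_f[OF imageI[OF \<phi>]] .
    have "\<psi> s = \<phi> s" if "s \<in> F" for s using fun_cong[OF eq, of s] that by simp
    then show ?thesis unfolding \<psi>_def[symmetric] by (auto simp: fball_def pp_dist_def)
  qed
  moreover have "C \<subseteq> S" unfolding C_def by (auto intro: inv_into_into)
  moreover have "finite C" unfolding C_def using fin by (rule finite_imageI)
  ultimately have "is_cover M R F d 0 S C" using S unfolding is_cover_def C_def by blast
  moreover have "card C \<le> card (?r ` S)" unfolding C_def using fin by (rule card_image_le)
  ultimately show ?thesis by blast
qed

lemma refine_cover:
  assumes cov: "is_cover M R F d e S C" and S: "S \<subseteq> sa_maps M R d"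
    and F: "F \<subseteq> fullpg M R" "finite F"
  shows "\<exists>C0. is_cover M R F d 0 S C0 \<and> card C0 \<le> card C * (2^d * (d+1)^nat \<lfloor>e * real d\<rfloor>)^card F"
proof -
  obtain C0 where C0: "is_cover M R F d 0 S C0" "card C0 \<le> card ((\<lambda>\<phi>. restrict \<phi> F) ` S)"
    using card_restrictions_le[OF cov S F] exact_cover_from_restrictions[OF S] by blast
  then show ?thesis using le_trans[OF C0(2)] card_restrictions_le[OF cov S F] by auto
qed

text \<open>Every set of maps has an exact cover: refine the single ball of radius 1.\<close>
lemma exact_cover_exists:
  assumes S: "S \<subseteq> sa_maps M R d" and F: "F \<subseteq> fullpg M R" "finite F"
  shows "\<exists>C. is_cover M R F d 0 S C"
proof -
  have empty: "(\<lambda>_. Map.empty) \<in> sa_maps M R d" by (auto simp: sa_maps_def ppd_def)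
  have "pp_dist d \<sigma> \<tau> \<le> 1" for \<sigma> \<tau>
  proof -
    have "card {i\<in>{1..d}. \<sigma> i \<noteq> \<tau> i} \<le> card {1..d}" by (rule card_mono) auto
    then show ?thesis by (cases "d = 0") (auto simp: pp_dist_def)
  qed
  then have "is_cover M R F d 1 S {\<lambda>_. Map.empty}" using empty by (auto simp: is_cover_def fball_def)
  then show ?thesis using refine_cover[OF _ S F] by blast
qed

lemma covnum_le: "is_cover M R F d e S C \<Longrightarrow> covnum M R F d e S \<le> card C"
  unfolding covnum_def is_cover_def by (intro Least_le exI[of _ C]) simp

lemma covnum_attained:
  assumes S: "S \<subseteq> sa_maps M R d" and F: "F \<subseteq> fullpg M R" "finite F" and e: "0 \<le> e"
  shows "\<exists>C. is_cover M R F d e S C \<and> card C = covnum M R F d e S"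
proof -
  obtain C where "is_cover M R F d e S C" using exact_cover_exists[OF S F] is_cover_mono e by blast
  then have "\<exists>k C. finite C \<and> C \<subseteq> sa_maps M R d \<and> card C = k \<and> S \<subseteq> (\<Union>\<psi>\<in>C. fball F d \<psi> e)"
    unfolding is_cover_def by blast
  from LeastI_ex[OF this] show ?thesis unfolding covnum_def is_cover_def by blast
qed

text \<open>The covering number vanishes only for the empty set; this keeps the case
  \<open>log 0 = -\<infinity>\<close> consistent across scales.\<close>
lemma covnum_eq_0_iff:
  assumes S: "S \<subseteq> sa_maps M R d" and F: "F \<subseteq> fullpg M R" "finite F" and e: "0 \<le> e"
  shows "covnum M R F d e S = 0 \<longleftrightarrow> S = {}"
proof
  assume "covnum M R F d e S = 0"
  with covnum_attained[OF S F e] obtain C where "is_cover M R F d e S C" "card C = 0" by auto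
  then show "S = {}" by (auto simp: is_cover_def)
next
  assume "S = {}"
  then have "is_cover M R F d e S {}" by (simp add: is_cover_def)
  from covnum_le[OF this] show "covnum M R F d e S = 0" by simp
qed

lemma covnum_antimono:
  assumes S: "S \<subseteq> sa_maps M R d" and F: "F \<subseteq> fullpg M R" "finite F" and e: "0 \<le> e1" "e1 \<le> e2"
  shows "covnum M R F d e2 S \<le> covnum M R F d e1 S"
proof -
  obtain C where "is_cover M R F d e1 S C" "card C = covnum M R F d e1 S"
    using covnum_attained[OF S F e(1)] by blast
  then show ?thesis using covnum_le[OF is_cover_mono[OF _ e(2)]] by fastforce
qed

lemma covnum_zero_le:
  assumes S: "S \<subseteq> sa_maps M R d" and F: "F \<subseteq> fullpg M R" "finite F" and e: "0 \<le> e"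
  shows "covnum M R F d 0 S \<le> covnum M R F d e S * (2^d * (d+1)^nat \<lfloor>e * real d\<rfloor>)^card F"
proof -
  obtain C where C: "is_cover M R F d e S C" "card C = covnum M R F d e S"
    using covnum_attained[OF S F e] by blast
  obtain C0 where C0: "is_cover M R F d 0 S C0"
    "card C0 \<le> card C * (2^d * (d+1)^nat \<lfloor>e * real d\<rfloor>)^card F"
    using refine_cover[OF C(1) S F] by blast
  show ?thesis unfolding C(2)[symmetric] by (rule le_trans[OF covnum_le[OF C0(1)] C0(2)])
qed

lemma SA_subset_sa_maps: "SA M R F n \<delta> d \<subseteq> sa_maps M R d"
  by (auto simp: SA_def)

lemma sa_term_antimono:
  assumes F: "F \<subseteq> fullpg M R" "finite F" and e: "0 \<le> e1" "e1 \<le> e2"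
  shows "sa_term M R F e2 n \<delta> d \<le> sa_term M R F e1 n \<delta> d"
proof -
  let ?S = "SA M R F n \<delta> d"
  define N1 where "N1 = covnum M R F d e1 ?S"
  define N2 where "N2 = covnum M R F d e2 ?S"
  have le: "N2 \<le> N1" unfolding N1_def N2_def by (rule covnum_antimono[OF SA_subset_sa_maps F e])
  have zero: "N2 = 0 \<longleftrightarrow> N1 = 0" unfolding N1_def N2_def
    using covnum_eq_0_iff[OF SA_subset_sa_maps F] e by (metis order_trans)
  have "0 \<le> real d * ln (real d)" by (cases "d = 0") auto
  then have "N1 \<noteq> 0 \<Longrightarrow> ln (real N2) / (real d * ln (real d)) \<le> ln (real N1) / (real d * ln (real d))"
    using zero le by (intro divide_right_mono) auto
  then show ?thesis using zero by (simp add: sa_term_def N1_def[symmetric] N2_def[symmetric])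
qed

lemma ln_refinement_factor_le:
  assumes e: "0 < e" and d: "2 \<le> d" and l: "ln 2 \<le> e * ln (real d)"
  shows "real d * ln 2 + real (nat \<lfloor>e * real d\<rfloor>) * ln (real d + 1) \<le> 3 * e * (real d * ln (real d))"
proof -
  have lnd: "0 < ln (real d)" using d by simp
  have "0 \<le> e * real d" using e by simp
  then have m: "real (nat \<lfloor>e * real d\<rfloor>) \<le> e * real d" by linarith
  have "2 * d \<le> d * d" using mult_right_mono[OF d, of d] by simp
  then have "d + 1 \<le> d * d" using d by linarith
  then have "real (d + 1) \<le> real (d * d)" by (simp only: of_nat_le_iff)
  then have "real d + 1 \<le> real d ^ 2" by (simp add: power2_eq_square)
  then have "ln (real d + 1) \<le> ln (real d ^ 2)" using d by (subst ln_le_cancel_iff) auto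
  then have ln_d1: "ln (real d + 1) \<le> 2 * ln (real d)" using d by (simp add: ln_realpow)
  have "real (nat \<lfloor>e * real d\<rfloor>) * ln (real d + 1) \<le> (e * real d) * (2 * ln (real d))"
    using m ln_d1 lnd e by (intro mult_mono) auto
  moreover have "real d * ln 2 \<le> real d * (e * ln (real d))" using l by (intro mult_left_mono) auto
  ultimately show ?thesis by (simp add: algebra_simps)
qed

lemma sa_term_zero_le:
  assumes F: "F \<subseteq> fullpg M R" "finite F" and e: "0 < e" and d: "2 \<le> d" and l: "ln 2 \<le> e * ln (real d)"
  shows "sa_term M R F 0 n \<delta> d \<le> sa_term M R F e n \<delta> d + ereal (3 * real (card F) * e)"
proof -
  let ?S = "SA M R F n \<delta> d"
  define N0 where "N0 = covnum M R F d 0 ?S"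
  define N where "N = covnum M R F d e ?S"
  define m where "m = nat \<lfloor>e * real d\<rfloor>"
  define f where "f = card F"
  define D where "D = real d * ln (real d)"
  have le: "N0 \<le> N * (2^d * (d+1)^m)^f" unfolding N0_def N_def m_def f_def
    by (rule covnum_zero_le[OF SA_subset_sa_maps F]) (use e in simp)
  have zero: "N0 = 0 \<longleftrightarrow> N = 0" unfolding N0_def N_def
    using covnum_eq_0_iff[OF SA_subset_sa_maps F] e by (metis order_refl less_imp_le)
  have D: "0 < D" using d by (simp add: D_def)
  show ?thesis
  proof (cases "N = 0")
    case True
    then show ?thesis using zero by (simp add: sa_term_def N0_def[symmetric] N_def[symmetric])
  next
    case False
    have "real N0 \<le> real (N * (2^d * (d+1)^m)^f)" using le by (simp only: of_nat_le_iff)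
    also have "\<dots> = real N * (2^d * (real d + 1)^m)^f" by (simp add: add.commute)
    finally have "ln (real N0) \<le> ln (real N * (2^d * (real d + 1)^m)^f)"
      using False zero by (subst ln_le_cancel_iff) auto
    also have "\<dots> = ln (real N) + f * (real d * ln 2 + m * ln (real d + 1))"
      using False by (simp add: ln_mult ln_realpow)
    also have "\<dots> \<le> ln (real N) + f * (3 * e * D)"
      unfolding m_def D_def by (intro add_left_mono mult_left_mono ln_refinement_factor_le[OF e d l]) auto
    finally have "ln (real N0) / D \<le> (ln (real N) + (3 * f * e) * D) / D"
      using D by (intro divide_right_mono) (auto simp: algebra_simps)
    also have "\<dots> = ln (real N) / D + 3 * f * e" using D by (simp add: add_divide_distrib)
    finally show ?thesis
      using False zero by (simp add: sa_term_def N0_def[symmetric] N_def[symmetric] f_def D_def)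
  qed
qed

lemma eventually_ln_2_le:
  assumes e: "0 < (e::real)"
  shows "eventually (\<lambda>d. 2 \<le> d \<and> ln 2 \<le> e * ln (real d)) sequentially"
proof -
  have "eventually (\<lambda>d::nat. exp (ln 2 / e) \<le> real d) sequentially"
    by (rule eventually_sequentiallyI[of "nat \<lceil>exp (ln 2 / e)\<rceil>"]) linarith
  then show ?thesis
  proof (rule eventually_mono[OF eventually_conj[OF eventually_ge_at_top[of 2]]], safe)
    fix d :: nat assume "2 \<le> d" and ed: "exp (ln 2 / e) \<le> real d"
    then have "ln (exp (ln 2 / e)) \<le> ln (real d)" by (intro ln_mono) auto
    then have "ln 2 / e \<le> ln (real d)" by simp
    then show "ln 2 \<le> e * ln (real d)" using e by (simp add: pos_divide_le_eq mult.commute)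
  qed
qed

subsection \<open>Continuity at scale 0 for an abstract limit functional\<close>

text \<open>Functionals on sequences which respect eventual inequality and commute (up to \<open>\<le>\<close>)
  with adding a real constant; limsup, liminf and ultralimits are examples.\<close>
definition admissible_limit :: "((nat \<Rightarrow> ereal) \<Rightarrow> ereal) \<Rightarrow> bool" where
  "admissible_limit L \<longleftrightarrow>
     (\<forall>f g. eventually (\<lambda>d. f d \<le> g d) sequentially \<longrightarrow> L f \<le> L g)
     \<and> (\<forall>f c. L (\<lambda>d. f d + ereal c) \<le> L f + ereal c)"

lemma ereal_tendsto_at_right_zero:
  fixes s :: "real \<Rightarrow> ereal" and C :: real
  assumes below: "\<And>e. 0 < e \<Longrightarrow> s e \<le> s 0"
    and gap: "\<And>e. 0 < e \<Longrightarrow> s 0 \<le> s e + ereal (C * e)"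
  shows "(s \<longlongrightarrow> s 0) (at_right 0)"
proof (rule tendsto_sandwich)
  show "eventually (\<lambda>e. s 0 - ereal (C * e) \<le> s e) (at_right 0)"
    using eventually_at_right_less[of "0::real"] by (rule eventually_mono) (simp add: ereal_minus_le gap)
  show "eventually (\<lambda>e. s e \<le> s 0) (at_right 0)"
    using eventually_at_right_less[of "0::real"] by (rule eventually_mono) (rule below)
  have "((\<lambda>e. ereal (C * e)) \<longlongrightarrow> ereal (C * 0)) (at_right 0)" by (intro tendsto_intros)
  then have "((\<lambda>e. s 0 - ereal (C * e)) \<longlongrightarrow> s 0 - ereal 0) (at_right 0)"
    by (intro tendsto_diff_ereal_general) auto
  then show "((\<lambda>e. s 0 - ereal (C * e)) \<longlongrightarrow> s 0) (at_right 0)" by (simp add: zero_ereal_def[symmetric])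
qed (rule tendsto_const)

lemma entropy_tendsto_at_right_zero:
  assumes F: "F \<subseteq> fullpg M R" "finite F" and L: "admissible_limit L"
  shows "((\<lambda>e. INF n. INF \<delta>\<in>{0<..}. L (sa_term M R F e n \<delta>))
            \<longlongrightarrow> (INF n. INF \<delta>\<in>{0<..}. L (sa_term M R F 0 n \<delta>))) (at_right 0)"
proof -
  define s where "s e = (INF n. INF \<delta>\<in>{(0::real)<..}. L (sa_term M R F e n \<delta>))" for e
  have L_mono: "eventually (\<lambda>d. f d \<le> g d) sequentially \<Longrightarrow> L f \<le> L g" for f g
    using L by (simp add: admissible_limit_def)
  have s_le: "s e \<le> L (sa_term M R F e n \<delta>)" if "0 < \<delta>" for e n \<delta>
    unfolding s_def using that by (intro INF_lower2[of n] INF_lower) auto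
  show ?thesis unfolding s_def[symmetric]
  proof (rule ereal_tendsto_at_right_zero)
    fix e :: real assume e: "0 < e"
    let ?c = "ereal (3 * real (card F) * e)"
    show "s e \<le> s 0" unfolding s_def[of 0]
    proof (intro INF_greatest)
      fix n \<delta> assume \<delta>: "\<delta> \<in> {0::real<..}"
      have "s e \<le> L (sa_term M R F e n \<delta>)" using \<delta> by (intro s_le) auto
      also have "\<dots> \<le> L (sa_term M R F 0 n \<delta>)"
        using e by (intro L_mono always_eventually allI sa_term_antimono[OF F]) auto
      finally show "s e \<le> L (sa_term M R F 0 n \<delta>)" .
    qed
    have "s 0 - ?c \<le> L (sa_term M R F e n \<delta>)" if \<delta>: "0 < \<delta>" for n \<delta>
    proof -
      have "s 0 \<le> L (sa_term M R F 0 n \<delta>)" by (rule s_le[OF \<delta>])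
      also have "\<dots> \<le> L (\<lambda>d. sa_term M R F e n \<delta> d + ?c)"
        by (intro L_mono eventually_mono[OF eventually_ln_2_le[OF e]]) (auto intro: sa_term_zero_le[OF F e])
      also have "\<dots> \<le> L (sa_term M R F e n \<delta>) + ?c"
        using L by (simp add: admissible_limit_def)
      finally show ?thesis by (simp add: ereal_minus_le)
    qed
    then have "s 0 - ?c \<le> s e" unfolding s_def[of e] by (auto intro!: INF_greatest)
    then show "s 0 \<le> s e + ?c" by (simp add: ereal_minus_le)
  qed
qed

subsection \<open>The three limit functionals\<close>

lemma admissible_limsup: "admissible_limit (\<lambda>f. limsup f)"
  unfolding admissible_limit_def
proof (intro conjI allI impI)
  fix f g :: "nat \<Rightarrow> ereal" and c :: real
  show "eventually (\<lambda>d. f d \<le> g d) sequentially \<Longrightarrow> limsup f \<le> limsup g" by (rule Limsup_mono)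
  show "limsup (\<lambda>d. f d + ereal c) \<le> limsup f + ereal c"
    using ereal_limsup_add_mono[of f "\<lambda>_. ereal c"] by (simp add: Limsup_const)
qed

lemma admissible_liminf: "admissible_limit (\<lambda>f. liminf f)"
  unfolding admissible_limit_def
proof (intro conjI allI impI)
  fix f g :: "nat \<Rightarrow> ereal" and c :: real
  show "eventually (\<lambda>d. f d \<le> g d) sequentially \<Longrightarrow> liminf f \<le> liminf g" by (rule Liminf_mono)
  show "liminf (\<lambda>d. f d + ereal c) \<le> liminf f + ereal c"
    using ereal_liminf_limsup_add[of f "\<lambda>_. ereal c"] by (simp add: Limsup_const)
qed

lemma nonprincipal_ultrafilter_le_sequentially:
  assumes w: "nonprincipal_ultrafilter \<omega>" and P: "eventually P sequentially"
  shows "eventually P \<omega>"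
proof -
  obtain N where N: "\<And>n. N \<le> n \<Longrightarrow> P n" using P by (auto simp: eventually_sequentially)
  have "eventually (\<lambda>x. \<forall>k\<in>{..<N}. x \<noteq> k) \<omega>"
    using w by (intro eventually_ball_finite) (auto simp: nonprincipal_ultrafilter_def)
  then show ?thesis by (rule eventually_mono) (metis N lessThan_iff not_le)
qed

text \<open>Every sequence in the compact space of extended reals converges along an ultrafilter.\<close>
lemma ultrafilter_tendsto_Lim:
  fixes f :: "nat \<Rightarrow> ereal"
  assumes w: "nonprincipal_ultrafilter \<omega>"
  shows "(f \<longlongrightarrow> Lim \<omega> f) \<omega>"
proof -
  have nb: "\<omega> \<noteq> bot" using w by (simp add: nonprincipal_ultrafilter_def)
  then have "filtermap f \<omega> \<noteq> bot" by (simp add: filtermap_bot_iff)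
  then obtain x where x: "inf (nhds x) (filtermap f \<omega>) \<noteq> bot"
    using compact_UNIV[unfolded compact_filter] by auto
  have "(f \<longlongrightarrow> x) \<omega>"
  proof (rule topological_tendstoI, rule ccontr)
    fix S assume S: "open S" "x \<in> S" and "\<not> eventually (\<lambda>n. f n \<in> S) \<omega>"
    then have "eventually (\<lambda>y. y \<notin> S) (filtermap f \<omega>)"
      using w by (auto simp: nonprincipal_ultrafilter_def eventually_filtermap)
    moreover have "eventually (\<lambda>y. y \<in> S) (nhds x)" using S by (rule eventually_nhds_in_open)
    ultimately have "eventually (\<lambda>_. False) (inf (nhds x) (filtermap f \<omega>))"
      unfolding eventually_inf by blast
    then show False using x by (simp add: eventually_False)
  qed
  moreover have "Lim \<omega> f = x" using nb \<open>(f \<longlongrightarrow> x) \<omega>\<close> by (intro tendsto_Lim) auto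
  ultimately show ?thesis by simp
qed

lemma admissible_ultralimit:
  assumes w: "nonprincipal_ultrafilter \<omega>"
  shows "admissible_limit (\<lambda>f. Lim \<omega> f)"
proof -
  have nb: "\<omega> \<noteq> bot" using w by (simp add: nonprincipal_ultrafilter_def)
  have "Lim \<omega> (\<lambda>d. f d + ereal c) = Lim \<omega> f + ereal c" for f c
    using nb tendsto_add_ereal_general1[OF _ ultrafilter_tendsto_Lim[OF w] tendsto_const]
    by (intro tendsto_Lim) auto
  then show ?thesis unfolding admissible_limit_def
    using tendsto_le[OF nb ultrafilter_tendsto_Lim[OF w] ultrafilter_tendsto_Lim[OF w]
        nonprincipal_ultrafilter_le_sequentially[OF w]] by auto
qed

theorem mainTheorem10:
  fixes M :: "'a::polish_space measure" and R :: "('a \<times> 'a) set"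
    and F :: "'a pmap set set"
  assumes "prob_space M" and "sets M = sets borel"
    and "pmp_cber M R"
    and "finite F" and "F \<subseteq> fullpg M R"
  shows "((\<lambda>\<epsilon>. s_eps M R F \<epsilon>) \<longlongrightarrow> s_eps M R F 0) (at_right 0)
    \<and> ((\<lambda>\<epsilon>. ls_eps M R F \<epsilon>) \<longlongrightarrow> ls_eps M R F 0) (at_right 0)
    \<and> (\<forall>\<omega>. nonprincipal_ultrafilter \<omega> \<longrightarrow>
          ((\<lambda>\<epsilon>. so_eps M R F \<omega> \<epsilon>) \<longlongrightarrow> so_eps M R F \<omega> 0) (at_right 0))"
proof -
  have F: "F \<subseteq> fullpg M R" "finite F" using assms by auto
  show ?thesis
    unfolding s_eps_def ls_eps_def so_eps_def
    using entropy_tendsto_at_right_zero[OF F admissible_limsup]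
      entropy_tendsto_at_right_zero[OF F admissible_liminf]
      entropy_tendsto_at_right_zero[OF F admissible_ultralimit]
    by blast
qed

end
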